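(* $$1\le\liminf_{j\to+\infty}\frac{\log p^{(j)}_j}{j\log j}\le\limsup_{j\to+\infty}\frac{\log p^{(j)}_j}{j\log j}\le2.$$
   Context: Let $p_n$ denote the $n$-th prime number. Define $p^{(0)}_n=n$ and recursively $p^{(k+1)}_n=p_{p^{(k)}_n}$ for $k\in\mathbb N_0$. $\log$ is the natural logarithm. *)

theory Defs
  imports "HOL-Analysis.Analysis" "HOL-Computational_Algebra.Primes" "HOL-Library.Infinite_Set"
begin

text \<open>The n-th prime number, 1-indexed: nth_prime 1 = 2, nth_prime 2 = 3, ...
  (nth_prime 0 is a junk value, 0; it never occurs in the statement.)\<close>
definition nth_prime :: "nat \<Rightarrow> nat" where
  "nth_prime n = (if n = 0 then 0 else enumerate {p::nat. prime p} (n - 1))"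

definition iter_prime :: "nat \<Rightarrow> nat \<Rightarrow> nat" where
  "iter_prime k n = (nth_prime ^^ k) n"

end

theory Submission
  imports Defs "HOL-Real_Asymp.Real_Asymp"
begin

(* Put L k = ln p^(k)_j. Chebyshev-type bounds n ln n / (8 ln 2) <= p_n <= 26 n ln n, obtained
   from Erdos' estimate prod_{p <= x} p <= 4^x and from the central binomial coefficient,
   turn into L (k+1) = L k + ln (L k) + O(1). Along j such steps from L 0 = ln j, the
   sequence grows at least like k ln k - O(k), and as long as L k <= j^2 each step adds at
   most 2 ln j + O(1); hence j ln j - O(j) <= L j <= 2 j ln j + O(j). *)

section \<open>Chebyshev bounds for the \<open>n\<close>-th prime\<close>

definition primes_pi :: "nat \<Rightarrow> nat" where
  "primes_pi x = card {p. prime p \<and> p \<le> x}"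

definition primorial :: "nat \<Rightarrow> nat" where
  "primorial x = \<Prod>{p. prime p \<and> p \<le> x}"

lemma nth_prime_prime: "1 \<le> n \<Longrightarrow> prime (nth_prime n)"
  using enumerate_in_set[OF primes_infinite] by (simp add: nth_prime_def)

lemma nth_prime_strict_mono_on: "strict_mono_on {1..} nth_prime"
  by (rule strict_mono_onI) (use primes_infinite in \<open>auto simp: nth_prime_def\<close>)

lemma nth_prime_gt:
  assumes "1 \<le> n"
  shows "n < nth_prime n"
proof -
  have bound: "i + 2 \<le> enumerate {p::nat. prime p} i" for i
  proof (induction i)
    case 0
    show ?case using prime_ge_2_nat[OF enumerate_in_set[OF primes_infinite, of 0, simplified]] by simp
  next
    case (Suc i)
    then show ?case using enumerate_step[OF primes_infinite, of i] by simp
  qed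
  then show ?thesis using bound[of "n - 1"] assms by (simp add: nth_prime_def)
qed

lemma nth_prime_surj: "prime q \<Longrightarrow> \<exists>n\<ge>1. nth_prime n = q"
proof -
  assume "prime q"
  then obtain i where "enumerate {p::nat. prime p} i = q"
    using enumerate_Ex[OF primes_infinite] by blast
  then show ?thesis by (intro exI[of _ "Suc i"]) (simp add: nth_prime_def)
qed

lemma primes_pi_less_nth_prime:
  assumes "1 \<le> n" "x < nth_prime n"
  shows "primes_pi x < n"
proof -
  have "{p. prime p \<and> p \<le> x} \<subseteq> nth_prime ` {1..<n}"
  proof
    fix q assume q: "q \<in> {p. prime p \<and> p \<le> x}"
    then obtain i where i: "1 \<le> i" "nth_prime i = q" using nth_prime_surj by blast
    then have "i < n"
      using strict_mono_on_less[OF nth_prime_strict_mono_on, of i n] q assms by auto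
    with i show "q \<in> nth_prime ` {1..<n}" by auto
  qed
  then have "primes_pi x \<le> card (nth_prime ` {1..<n})"
    unfolding primes_pi_def by (rule card_mono[rotated]) simp
  also have "\<dots> \<le> n - 1" using card_image_le[of "{1..<n}" nth_prime] by simp
  finally show ?thesis using assms(1) by simp
qed

lemma prod_primes_dvd:
  fixes A :: "nat set"
  assumes "finite A" "\<And>p. p \<in> A \<Longrightarrow> prime p" "\<And>p. p \<in> A \<Longrightarrow> p dvd c"
  shows "\<Prod>A dvd c"
  using assms
proof (induction A rule: finite_induct)
  case (insert p A)
  have "coprime p (\<Prod>A)"
    using insert by (intro prod_coprime_right primes_coprime) auto
  with insert show ?case by (simp add: divides_mult)
qed simp

lemma prime_dvd_binomial:
  fixes p :: nat
  assumes p: "prime p" and "k < p" "n - k < p" "p \<le> n"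
  shows "p dvd n choose k"
proof -
  have "p dvd fact k * fact (n - k) * (n choose k)"
    using binomial_fact_lemma[of k n] prime_dvd_fact_iff[OF p, of n] assms by simp
  moreover have "\<not> p dvd fact k * fact (n - k)"
    using assms by (simp add: prime_dvd_mult_iff prime_dvd_fact_iff)
  ultimately show ?thesis using p by (simp add: prime_dvd_mult_iff)
qed

lemma binomial_odd_middle_le: "(2*k+1) choose k \<le> 4^k"
proof -
  have "2 * ((2*k+1) choose k) = ((2*k+1) choose k) + ((2*k+1) choose (k+1))"
    using binomial_symmetric[of k "2*k+1"] by simp
  also have "\<dots> = (\<Sum>i\<in>{k, k+1}. (2*k+1) choose i)" by simp
  also have "\<dots> \<le> (\<Sum>i\<le>2*k+1. (2*k+1) choose i)" by (intro sum_mono2) auto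
  also have "\<dots> = 2 ^ (2*k+1)" by (rule choose_row_sum)
  also have "\<dots> = 2 * 4^k" by (simp add: power_mult)
  finally show ?thesis by simp
qed

lemma primorial_odd_le: "primorial (2*k+1) \<le> primorial (k+1) * 4^k"
proof -
  define B where "B = {p. prime p \<and> k+1 < p \<and> p \<le> 2*k+1}"
  have split: "{p. prime p \<and> p \<le> 2*k+1} = {p. prime p \<and> p \<le> k+1} \<union> B"
    by (auto simp: B_def)
  have "primorial (2*k+1) = primorial (k+1) * \<Prod>B"
    unfolding primorial_def split by (rule prod.union_disjoint) (auto simp: B_def)
  moreover have "\<Prod>B dvd (2*k+1) choose k"
  proof (rule prod_primes_dvd)
    fix p assume "p \<in> B"
    then show "p dvd (2*k+1) choose k" by (intro prime_dvd_binomial) (auto simp: B_def)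
  qed (auto simp: B_def)
  then have "\<Prod>B \<le> (2*k+1) choose k" by (rule dvd_imp_le) simp
  ultimately show ?thesis using binomial_odd_middle_le[of k] by simp
qed

lemma primorial_le_four_pow: "primorial m \<le> 4 ^ m"
proof (induction m rule: less_induct)
  case (less m)
  consider "m \<le> 2" | "2 < m" "even m" | k where "m = 2*k+1" "1 \<le> k"
  proof (cases "m \<le> 2")
    case False
    then show ?thesis using that(2,3) by (cases "even m") (auto elim: oddE)
  qed (use that(1) in blast)
  then show ?case
  proof cases
    case 1
    then have "{p. prime p \<and> p \<le> m} = (if m < 2 then {} else {2})"
      by (auto dest: prime_ge_2_nat)
    moreover have "m < 2 \<or> m = 2" using 1 by auto
    ultimately show ?thesis by (auto simp: primorial_def)
  next
    case 2
    then have "\<not> prime m" using prime_odd_nat[of m] by auto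
    then have "{p. prime p \<and> p \<le> m} = {p. prime p \<and> p \<le> m - 1}" by (auto simp: le_less)
    then have "primorial m = primorial (m - 1)" by (simp add: primorial_def)
    also have "\<dots> \<le> 4 ^ (m - 1)" using less 2 by simp
    also have "\<dots> \<le> 4 ^ m" by simp
    finally show ?thesis .
  next
    case 3
    then have "primorial m \<le> 4 ^ (k+1) * 4^k"
      using primorial_odd_le[of k] less[of "k+1"] by (auto intro: order.trans)
    also have "\<dots> = 4 ^ m" unfolding power_add[symmetric] using 3 by simp
    finally show ?thesis .
  qed
qed

lemma multiplicity_eq_card_prime_power_dvd:
  fixes p m N :: nat
  assumes p: "prime p" and m: "0 < m" "m \<le> N"
  shows "multiplicity p m = card {i \<in> {1..N}. p ^ i dvd m}"
proof -
  have dvd_iff: "p ^ i dvd m \<longleftrightarrow> i \<le> multiplicity p m" for i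
    using m p by (intro power_dvd_iff_le_multiplicity) auto
  have "multiplicity p m < 2 ^ multiplicity p m" by (rule less_exp)
  also have "\<dots> \<le> p ^ multiplicity p m" using prime_ge_2_nat[OF p] by (rule power_mono) simp
  also have "\<dots> \<le> m" using dvd_iff m by (intro dvd_imp_le) auto
  finally have "multiplicity p m \<le> N" using m by linarith
  then have "{i \<in> {1..N}. p ^ i dvd m} = {1..multiplicity p m}" by (auto simp: dvd_iff)
  then show ?thesis by simp
qed

text \<open>Legendre's formula; the terms with \<open>i > N\<close> vanish because then \<open>p ^ i > n\<close>.\<close>
lemma multiplicity_fact:
  fixes p :: nat
  assumes p: "prime p"
  shows "n \<le> N \<Longrightarrow> multiplicity p (fact n) = (\<Sum>i=1..N. n div p ^ i)"
proof (induction n)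
  case (Suc n)
  have "multiplicity p (fact (Suc n) :: nat) = multiplicity p (Suc n * fact n)"
    by simp
  also have "\<dots> = multiplicity p (Suc n) + multiplicity p (fact n :: nat)"
    using p by (intro prime_elem_multiplicity_mult_distrib) auto
  also have "multiplicity p (Suc n) = (\<Sum>i=1..N. if p ^ i dvd Suc n then 1 else 0)"
    using multiplicity_eq_card_prime_power_dvd[OF p, of "Suc n" N] Suc.prems
    by (simp add: sum.inter_filter[symmetric])
  also have "multiplicity p (fact n :: nat) = (\<Sum>i=1..N. n div p ^ i)"
    using Suc by simp
  also have "(\<Sum>i=1..N. if p ^ i dvd Suc n then 1 else 0) + (\<Sum>i=1..N. n div p ^ i)
      = (\<Sum>i=1..N. Suc n div p ^ i)"
    unfolding sum.distrib[symmetric] using prime_gt_0_nat[OF p]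
    by (intro sum.cong) (simp_all add: div_Suc dvd_eq_mod_eq_0)
  finally show ?case .
qed simp

lemma double_div_le: "2*m div (q::nat) \<le> 2*(m div q) + 1"
proof (cases "q = 0")
  case False
  have "m = q * (m div q) + m mod q" "m mod q < q" using False by simp_all
  moreover have "q * (2 * (m div q) + 2) = 2 * (q * (m div q)) + 2 * q" by (simp add: algebra_simps)
  ultimately have "2*m < q * (2 * (m div q) + 2)" by linarith
  then have "2*m div q < 2 * (m div q) + 2"
    using False by (simp add: div_less_iff_less_mult mult.commute)
  then show ?thesis by simp
qed simp

lemma multiplicity_central_binomial:
  fixes p :: nat
  assumes p: "prime p"
  shows "multiplicity p ((2*m) choose m) = (\<Sum>i=1..2*m. 2*m div p ^ i - 2 * (m div p ^ i))"
proof -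
  have "fact m * fact m * ((2*m) choose m) = (fact (2*m) :: nat)"
    using binomial_fact_lemma[of m "2*m"] by (simp add: mult_2)
  moreover have "multiplicity p (fact m * fact m * ((2*m) choose m))
      = 2 * multiplicity p (fact m :: nat) + multiplicity p ((2*m) choose m)"
    using p by (simp add: prime_elem_multiplicity_mult_distrib)
  ultimately have "multiplicity p ((2*m) choose m)
      = (\<Sum>i=1..2*m. 2*m div p ^ i) - (\<Sum>i=1..2*m. 2 * (m div p ^ i))"
    using multiplicity_fact[OF p, of m "2*m"] multiplicity_fact[OF p, of "2*m" "2*m"]
    by (simp add: sum_distrib_left)
  also have "\<dots> = (\<Sum>i=1..2*m. 2*m div p ^ i - 2 * (m div p ^ i))"
  proof (rule sum_subtractf_nat[symmetric])
    fix i
    show "2 * (m div p ^ i) \<le> 2*m div p ^ i"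
      using div_le_mono[of "2 * (m div p ^ i) * p ^ i" "2*m" "p ^ i"] prime_gt_0_nat[OF p]
      by (simp add: div_times_less_eq_dividend)
  qed
  finally show ?thesis .
qed

lemma prime_power_multiplicity_central_binomial_le:
  fixes p :: nat
  assumes p: "prime p" and m: "1 \<le> m"
  shows "p ^ multiplicity p ((2*m) choose m) \<le> 2*m"
proof (rule ccontr)
  define v where "v = multiplicity p ((2*m) choose m)"
  define t where "t i = 2*m div p ^ i - 2 * (m div p ^ i)" for i
  assume "\<not> p ^ multiplicity p ((2*m) choose m) \<le> 2*m"
  then have big: "2*m < p ^ v" by (simp add: v_def)
  then have "v \<noteq> 0" using m by (intro notI) simp
  have t_le_1: "t i \<le> 1" for i
    using double_div_le[of m "p ^ i"] by (simp add: t_def)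
  have t_vanish: "t i = 0" if "v \<le> i" for i
  proof -
    have "p ^ v \<le> p ^ i" using that prime_gt_0_nat[OF p] by (intro power_increasing) auto
    then show ?thesis using big by (simp add: t_def)
  qed
  have "v = (\<Sum>i=1..2*m. t i)" using multiplicity_central_binomial[OF p] by (simp add: v_def t_def)
  also have "\<dots> = (\<Sum>i\<in>{1..2*m} \<inter> {..<v}. t i)"
    by (rule sum.mono_neutral_right) (simp_all add: t_vanish not_less)
  also have "\<dots> \<le> card ({1..2*m} \<inter> {..<v})"
    using sum_bounded_above[of "{1..2*m} \<inter> {..<v}" t 1] t_le_1 by simp
  also have "\<dots> \<le> card {1..<v}" by (rule card_mono) auto
  finally show False using \<open>v \<noteq> 0\<close> by simp
qed

lemma central_binomial_le_pow_primes_pi: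
  assumes m: "1 \<le> m"
  shows "(2*m) choose m \<le> (2*m) ^ primes_pi (2*m)"
proof -
  define C where "C = (2*m) choose m"
  have "prime_factors C \<subseteq> {p. prime p \<and> p \<le> 2*m}"
  proof
    fix p assume "p \<in> prime_factors C"
    then have "prime p" "p dvd C" by (auto simp: in_prime_factors_iff)
    moreover have "C dvd fact (2*m)"
      using binomial_fact_lemma[of m "2*m"] unfolding C_def by (metis dvd_triv_right le_add2 mult_2)
    ultimately show "p \<in> {p. prime p \<and> p \<le> 2*m}"
      using prime_dvd_fact_iff dvd_trans by blast
  qed
  then have card_le: "card (prime_factors C) \<le> primes_pi (2*m)"
    unfolding primes_pi_def by (intro card_mono) auto
  have "C = (\<Prod>p\<in>prime_factors C. p ^ multiplicity p C)"
    by (rule prime_factorization_nat) (simp add: C_def)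
  also have "\<dots> \<le> (\<Prod>p\<in>prime_factors C. 2*m)"
    by (intro prod_mono) (auto simp: C_def intro: prime_power_multiplicity_central_binomial_le m)
  also have "\<dots> = (2*m) ^ card (prime_factors C)" by (rule prod_constant)
  also have "\<dots> \<le> (2*m) ^ primes_pi (2*m)"
    using m by (intro power_increasing[OF card_le]) simp
  finally show ?thesis unfolding C_def .
qed

lemma primes_pi_lower_bound:
  assumes m: "1 \<le> m"
  shows "real m * ln 2 \<le> real (primes_pi (2*m)) * ln (2 * real m)"
proof -
  have "(2::real) ^ m = (real (2*m) / real m) ^ m" using m by simp
  also have "\<dots> \<le> real ((2*m) choose m)" by (rule binomial_ge_n_over_k_pow_k) simp
  also have "\<dots> \<le> real ((2*m) ^ primes_pi (2*m))"
    using central_binomial_le_pow_primes_pi[OF m] by linarith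
  finally have "(2::real) ^ m \<le> (2 * real m) ^ primes_pi (2*m)" by simp
  then have "ln ((2::real) ^ m) \<le> ln ((2 * real m) ^ primes_pi (2*m))"
    using m by (subst ln_le_cancel_iff) auto
  moreover have "ln ((2 * real m) ^ primes_pi (2*m)) = real (primes_pi (2*m)) * ln (2 * real m)"
    by (rule ln_realpow)
  ultimately show ?thesis by (simp add: ln_realpow)
qed

lemma nth_prime_le_mult_ln_nth_prime:
  assumes n: "2 \<le> n"
  shows "real (nth_prime n) \<le> 2 + 3 * real n * ln (real (nth_prime n))"
proof -
  define q where "q = nth_prime n"
  define m where "m = (q - 1) div 2"
  have "n < q" using nth_prime_gt[of n] n by (simp add: q_def)
  then have m: "1 \<le> m" "2*m < q" "real q - 2 \<le> 2 * real m" using n by (auto simp: m_def)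
  have "primes_pi (2*m) < n" using primes_pi_less_nth_prime[of n "2*m"] n m by (simp add: q_def)
  have "real m * ln 2 \<le> real (primes_pi (2*m)) * ln (2 * real m)"
    by (rule primes_pi_lower_bound[OF m(1)])
  also have "\<dots> \<le> real n * ln (real q)"
    using \<open>primes_pi (2*m) < n\<close> m by (intro mult_mono) auto
  finally have "real m * ln 2 \<le> real n * ln (real q)" .
  moreover have "(real q - 2) / 2 * (2/3) \<le> real m * ln 2"
    using m ln2_ge_two_thirds by (intro mult_mono) auto
  ultimately show ?thesis unfolding q_def by (simp add: algebra_simps)
qed

lemma le_mult_ln_of_le_mult_ln_self:
  fixes x n :: real
  assumes n: "2 \<le> n" and x: "1 \<le> x" and le: "x \<le> 2 + 3 * n * ln x"
  shows "x \<le> 26 * n * ln n"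
proof -
  txt \<open>First \<open>ln x \<le> 2 sqrt x\<close> gives \<open>x = O(n\<^sup>2)\<close>, and then \<open>ln x = O(ln n)\<close>.\<close>
  define s where "s = sqrt x"
  have s: "1 \<le> s" "x = s * s" using x by (auto simp: s_def)
  have "ln x = 2 * ln s" using x by (simp add: s_def ln_sqrt)
  also have "\<dots> \<le> 2 * s" using ln_le_minus_one[of s] s by simp
  finally have "3 * n * ln x \<le> 3 * n * (2 * s)" using n by (intro mult_left_mono) auto
  then have "s * s \<le> 2 + 6 * (n * s)" using le s by simp
  moreover have "1 * 1 \<le> n * s" using n s by (intro mult_mono) auto
  ultimately have "s * s \<le> (8 * n) * s" by simp
  then have "s \<le> 8 * n" using s by simp
  then have "s * s \<le> (8 * n) * (8 * n)" using s by (intro mult_mono) auto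
  then have "x \<le> 2 ^ 6 * n\<^sup>2" using s by (simp add: power2_eq_square)
  then have "ln x \<le> ln (2 ^ 6 * n\<^sup>2)" using x by (subst ln_le_cancel_iff) auto
  also have "\<dots> = 6 * ln 2 + 2 * ln n" using n by (simp only: ln_mult ln_realpow) simp
  also have "\<dots> \<le> 8 * ln n" using n by simp
  finally have ln_x: "n * ln x \<le> 8 * (n * ln n)" using n by (simp add: mult_left_mono)
  have "ln 2 \<le> ln n" using n by simp
  with ln2_ge_two_thirds have "2 / 3 \<le> ln n" by linarith
  then have "2 * (2 / 3) \<le> n * ln n" using n by (intro mult_mono) auto
  moreover have "x \<le> 2 + 3 * (n * ln x)" using le by (simp add: mult.assoc)
  ultimately have "x \<le> 26 * (n * ln n)" using ln_x by linarith
  then show ?thesis by (simp add: mult.assoc)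
qed

lemma nth_prime_upper_bound:
  assumes "2 \<le> n"
  shows "real (nth_prime n) \<le> 26 * real n * ln (real n)"
proof (rule le_mult_ln_of_le_mult_ln_self)
  show "1 \<le> real (nth_prime n)" using nth_prime_gt[of n] assms by simp
qed (use assms nth_prime_le_mult_ln_nth_prime in auto)

lemma primorial_pos: "0 < primorial x"
  unfolding primorial_def by (intro prod_pos) (auto simp: prime_gt_0_nat)

lemma prod_nth_primes_le: "(\<Prod>i=1..n. nth_prime i) \<le> 4 ^ nth_prime n"
proof -
  have "inj_on nth_prime {1..n}"
    by (rule inj_on_subset[OF strict_mono_on_imp_inj_on[OF nth_prime_strict_mono_on]]) auto
  then have "(\<Prod>i=1..n. nth_prime i) = \<Prod>(nth_prime ` {1..n})" by (simp add: prod.reindex)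
  also have "\<dots> \<le> primorial (nth_prime n)"
  proof (rule dvd_imp_le[OF _ primorial_pos])
    have "nth_prime ` {1..n} \<subseteq> {p. prime p \<and> p \<le> nth_prime n}"
      using strict_mono_on_leD[OF nth_prime_strict_mono_on] nth_prime_prime by auto
    then show "\<Prod>(nth_prime ` {1..n}) dvd primorial (nth_prime n)"
      unfolding primorial_def by (rule prod_dvd_prod_subset[rotated]) simp
  qed
  also have "\<dots> \<le> 4 ^ nth_prime n" by (rule primorial_le_four_pow)
  finally show ?thesis .
qed

lemma prod_nth_primes_ge: "(n div 2 + 2) ^ (n - n div 2) \<le> (\<Prod>i=1..n. nth_prime i)"
proof -
  have "(n div 2 + 2) ^ (n - n div 2) = (\<Prod>i\<in>{n div 2<..n}. n div 2 + 2)" by simp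
  also have "\<dots> \<le> (\<Prod>i\<in>{n div 2<..n}. nth_prime i)"
  proof (intro prod_mono conjI)
    fix i assume "i \<in> {n div 2<..n}"
    then show "n div 2 + 2 \<le> nth_prime i" using nth_prime_gt[of i] by auto
  qed simp
  also have "\<dots> \<le> (\<Prod>i=1..n. nth_prime i)"
  proof (rule dvd_imp_le)
    show "(\<Prod>i\<in>{n div 2<..n}. nth_prime i) dvd (\<Prod>i=1..n. nth_prime i)"
      by (rule prod_dvd_prod_subset) auto
    show "0 < (\<Prod>i=1..n. nth_prime i)"
      using nth_prime_gt by (intro prod_pos) fastforce
  qed
  finally show ?thesis .
qed

lemma nth_prime_lower_bound:
  assumes n: "4 \<le> n"
  shows "real n * ln (real n) \<le> 8 * ln 2 * real (nth_prime n)"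
proof -
  define a where "a = n div 2 + 2"
  define k where "k = n - n div 2"
  have ln4: "ln (4::real) = 2 * ln 2" using ln_realpow[of 2 2] by simp
  have "a ^ k \<le> 4 ^ nth_prime n"
    using prod_nth_primes_ge[of n] prod_nth_primes_le[of n] unfolding a_def k_def by linarith
  then have "real a ^ k \<le> 4 ^ nth_prime n"
    by (metis of_nat_le_iff of_nat_numeral of_nat_power)
  then have "ln (real a ^ k) \<le> ln (4 ^ nth_prime n)"
    by (subst ln_le_cancel_iff) (auto simp: a_def)
  then have upper: "real k * ln (real a) \<le> real (nth_prime n) * (2 * ln 2)"
    using ln4 by (simp add: ln_realpow)
  have "ln (real n) / 2 \<le> ln (real n) - ln 2"
    using n ln4 ln_le_cancel_iff[of 4 "real n"] by simp
  also have "\<dots> = ln (real n / 2)" using n by (simp add: ln_div)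
  also have "\<dots> \<le> ln (real a)"
  proof -
    have "real n / 2 \<le> real a" unfolding a_def by linarith
    then show ?thesis using n by (subst ln_le_cancel_iff) auto
  qed
  finally have "real n / 2 * (ln (real n) / 2) \<le> real k * ln (real a)"
    using n by (intro mult_mono) (auto simp: k_def)
  with upper show ?thesis by (simp add: algebra_simps)
qed

lemma ln_nth_prime_le:
  assumes a: "2 \<le> a"
  shows "ln (real (nth_prime a)) \<le> ln (real a) + ln (ln (real a)) + ln 26"
proof -
  have "ln (real (nth_prime a)) \<le> ln (26 * real a * ln (real a))"
    using nth_prime_upper_bound[OF a] nth_prime_gt[of a] a by (subst ln_le_cancel_iff) auto
  also have "\<dots> = ln 26 + ln (real a) + ln (ln (real a))" using a by (simp add: ln_mult)
  finally show ?thesis by simp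
qed

lemma ln_nth_prime_ge:
  assumes a: "4 \<le> a"
  shows "ln (real a) + ln (ln (real a)) - ln (8 * ln 2) \<le> ln (real (nth_prime a))"
proof -
  have "ln (real a) + ln (ln (real a)) = ln (real a * ln (real a))" using a by (simp add: ln_mult)
  also have "\<dots> \<le> ln (8 * ln 2 * real (nth_prime a))"
    using nth_prime_lower_bound[OF a] nth_prime_gt[of a] a by (subst ln_le_cancel_iff) auto
  also have "\<dots> = ln (8 * ln 2) + ln (real (nth_prime a))"
    using nth_prime_gt[of a] a by (simp add: ln_mult)
  finally show ?thesis by simp
qed

section \<open>The recurrence \<open>L (k + 1) = L k + ln (L k) + O(1)\<close>\<close>

lemma ln_recurrence_upper:
  fixes L :: "nat \<Rightarrow> real" and c M :: real
  assumes pos: "\<And>k. 0 < L k"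
    and step: "\<And>k. L (Suc k) \<le> L k + ln (L k) + c"
    and room: "L 0 + real n * (ln M + c) \<le> M" and incr: "0 \<le> ln M + c"
  shows "L n \<le> L 0 + real n * (ln M + c)"
proof -
  have "L k \<le> L 0 + real k * (ln M + c)" if "k \<le> n" for k
    using that
  proof (induction k)
    case (Suc k)
    then have IH: "L k \<le> L 0 + real k * (ln M + c)" by simp
    have "real k * (ln M + c) \<le> real n * (ln M + c)"
      using Suc.prems incr by (intro mult_right_mono) auto
    then have "L k \<le> M" using IH room by linarith
    then have "ln (L k) \<le> ln M" using pos[of k] by (subst ln_le_cancel_iff) auto
    moreover have "real (Suc k) * (ln M + c) = real k * (ln M + c) + (ln M + c)"
      by (simp add: algebra_simps)
    ultimately show ?case using IH step[of k] by linarith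
  qed simp
  then show ?thesis by simp
qed

lemma succ_mult_ln_le:
  fixes x :: real
  assumes x: "1 \<le> x"
  shows "(x + 1) * ln (x + 1) \<le> (x + 1) * ln x + 2"
proof -
  have "ln (x + 1) - ln x = ln ((x + 1) / x)" using x by (simp add: ln_div)
  also have "\<dots> \<le> (x + 1) / x - 1" using x by (intro ln_le_minus_one) simp
  also have "\<dots> = 1 / x" using x by (simp add: field_simps)
  finally have "(x + 1) * (ln (x + 1) - ln x) \<le> (x + 1) * (1 / x)"
    using x by (intro mult_left_mono) auto
  also have "\<dots> \<le> 2" using x by (simp add: field_simps)
  finally show ?thesis by (simp add: algebra_simps)
qed

lemma ln_recurrence_lower:
  fixes L :: "nat \<Rightarrow> real" and c :: real
  assumes pos: "\<And>k. 0 < L k"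
    and step: "\<And>k. L k + ln (L k) - c \<le> L (Suc k)"
    and start: "1 + c \<le> ln (L 0)" and c: "0 \<le> c"
  shows "real n * ln (real n) - (c + 2) * real n \<le> L n"
proof -
  have grow: "1 + c \<le> ln (L k) \<and> real k \<le> L k" for k
  proof (induction k)
    case 0
    show ?case using start pos[of 0] by simp
  next
    case (Suc k)
    then have "L k + 1 \<le> L (Suc k)" using step[of k] by linarith
    moreover from this have "ln (L k) \<le> ln (L (Suc k))" using pos by (subst ln_le_cancel_iff) auto
    ultimately show ?case using Suc by simp
  qed
  define g where "g k = real k * ln (real k) - (c + 2) * real k" for k
  have "g k \<le> L k" for k
  proof (induction k)
    case 0
    show ?case using pos[of 0] by (simp add: g_def)
  next
    case (Suc k)
    show ?case
    proof (cases "k = 0")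
      case True
      then show ?thesis using pos[of 1] c by (simp add: g_def)
    next
      case False
      then have k: "1 \<le> real k" by simp
      have "g (Suc k) = (real k + 1) * ln (real k + 1) - (c + 2) * (real k + 1)"
        by (simp add: g_def add.commute)
      also have "\<dots> \<le> (real k + 1) * ln (real k) + 2 - (c + 2) * (real k + 1)"
        using succ_mult_ln_le[OF k] by linarith
      also have "\<dots> = g k + ln (real k) - c" by (simp add: g_def algebra_simps)
      also have "\<dots> \<le> L k + ln (L k) - c"
        using Suc.IH grow[of k] k by (simp add: add_mono)
      also have "\<dots> \<le> L (Suc k)" by (rule step)
      finally show ?thesis .
    qed
  qed
  then show ?thesis by (simp add: g_def)
qed

section \<open>Iterated primes\<close>

lemma iter_prime_0 [simp]: "iter_prime 0 j = j"
  by (simp add: iter_prime_def)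

lemma iter_prime_Suc [simp]: "iter_prime (Suc k) j = nth_prime (iter_prime k j)"
  by (simp add: iter_prime_def)

lemma iter_prime_ge: "1 \<le> j \<Longrightarrow> j \<le> iter_prime k j"
proof (induction k)
  case (Suc k)
  then show ?case using nth_prime_gt[of "iter_prime k j"] by simp
qed simp

lemma ln_iter_prime_diag_le:
  assumes j: "2 \<le> j"
    and room: "ln (real j) + real j * (2 * ln (real j) + ln 26) \<le> real j ^ 2"
  shows "ln (real (iter_prime j j)) \<le> ln (real j) + real j * (2 * ln (real j) + ln 26)"
proof -
  have ge: "2 \<le> iter_prime k j" for k using iter_prime_ge[of j k] j by simp
  have ln_sq: "ln (real j ^ 2) = 2 * ln (real j)" by (simp add: ln_realpow)
  have "ln (real (iter_prime j j))
      \<le> ln (real (iter_prime 0 j)) + real j * (ln (real j ^ 2) + ln 26)"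
  proof (rule ln_recurrence_upper[where L = "\<lambda>k. ln (real (iter_prime k j))"])
    show "0 < ln (real (iter_prime k j))" for k using ge[of k] by simp
    show "ln (real (iter_prime (Suc k) j))
        \<le> ln (real (iter_prime k j)) + ln (ln (real (iter_prime k j))) + ln 26" for k
      using ln_nth_prime_le[OF ge[of k]] by simp
    show "ln (real (iter_prime 0 j)) + real j * (ln (real j ^ 2) + ln 26) \<le> real j ^ 2"
      using room ln_sq by simp
    show "0 \<le> ln (real j ^ 2) + ln 26" using ln_sq j by simp
  qed
  then show ?thesis using ln_sq by simp
qed

lemma ln_iter_prime_diag_ge:
  assumes j: "4 \<le> j" and start: "1 + ln (8 * ln 2) \<le> ln (ln (real j))"
  shows "real j * ln (real j) - (ln (8 * ln 2) + 2) * real j \<le> ln (real (iter_prime j j))"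
proof (rule ln_recurrence_lower[where L = "\<lambda>k. ln (real (iter_prime k j))", simplified])
  have ge: "4 \<le> iter_prime k j" for k using iter_prime_ge[of j k] j by simp
  show "0 < ln (real (iter_prime k j))" for k using ge[of k] by simp
  show "ln (real (iter_prime k j)) + ln (ln (real (iter_prime k j))) - ln (8 * ln 2)
      \<le> ln (real (nth_prime (iter_prime k j)))" for k
    by (rule ln_nth_prime_ge[OF ge])
  show "0 \<le> ln (8 * ln (2::real))" using ln2_ge_two_thirds by simp
qed (use start in simp)

lemma limsup_ln_iter_prime_diag_le:
  "limsup (\<lambda>j. ereal (ln (real (iter_prime j j)) / (real j * ln (real j)))) \<le> 2"
proof -
  define u where "u j = (ln (real j) + real j * (2 * ln (real j) + ln 26)) / (real j * ln (real j))"
    for j :: nat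
  have "eventually (\<lambda>j::nat. ln (real j) + real j * (2 * ln (real j) + ln 26) \<le> real j ^ 2) sequentially"
    by real_asymp
  then have "eventually (\<lambda>j. ereal (ln (real (iter_prime j j)) / (real j * ln (real j))) \<le> ereal (u j)) sequentially"
    using eventually_ge_at_top[of 2]
    by eventually_elim (auto simp: u_def intro!: divide_right_mono ln_iter_prime_diag_le)
  then have "limsup (\<lambda>j. ereal (ln (real (iter_prime j j)) / (real j * ln (real j)))) \<le> limsup (\<lambda>j. ereal (u j))"
    by (rule Limsup_mono)
  also have "\<dots> = 2"
    unfolding u_def by (rule lim_imp_Limsup) (simp_all, real_asymp)
  finally show ?thesis .
qed

lemma liminf_ln_iter_prime_diag_ge:
  "1 \<le> liminf (\<lambda>j. ereal (ln (real (iter_prime j j)) / (real j * ln (real j))))"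
proof -
  define w where "w j = (real j * ln (real j) - (ln (8 * ln 2) + 2) * real j) / (real j * ln (real j))"
    for j :: nat
  have "eventually (\<lambda>j::nat. 1 + ln (8 * ln 2) \<le> ln (ln (real j))) sequentially"
    by real_asymp
  then have "eventually (\<lambda>j. ereal (w j) \<le> ereal (ln (real (iter_prime j j)) / (real j * ln (real j)))) sequentially"
    using eventually_ge_at_top[of 4]
    by eventually_elim (auto simp: w_def intro!: divide_right_mono ln_iter_prime_diag_ge)
  then have "liminf (\<lambda>j. ereal (w j)) \<le> liminf (\<lambda>j. ereal (ln (real (iter_prime j j)) / (real j * ln (real j))))"
    by (rule Liminf_mono)
  moreover have "liminf (\<lambda>j. ereal (w j)) = ereal 1"
    unfolding w_def by (rule lim_imp_Liminf) (simp_all, real_asymp)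
  ultimately show ?thesis by (simp add: one_ereal_def)
qed

theorem corollary12:
  shows "1 \<le> liminf (\<lambda>j. ereal (ln (real (iter_prime j j)) / (real j * ln (real j))))
       \<and> liminf (\<lambda>j. ereal (ln (real (iter_prime j j)) / (real j * ln (real j))))
           \<le> limsup (\<lambda>j. ereal (ln (real (iter_prime j j)) / (real j * ln (real j))))
       \<and> limsup (\<lambda>j. ereal (ln (real (iter_prime j j)) / (real j * ln (real j)))) \<le> 2"
  by (intro conjI liminf_ln_iter_prime_diag_ge limsup_ln_iter_prime_diag_le Liminf_le_Limsup) simp

end
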